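(* Let $D$ be a division algebra and let $\sigma_1,\sigma_2$ be two commuting automorphisms of $D$. If $\sigma_1^{k_1}\circ\sigma_2^{-k_2}$ is not an inner automorphism of $D$ for any positive integers $k_1,k_2$, then the tuple $(\sigma_1,\sigma_2)$ is not automorphically normalizable over $D$.
   Context: All rings are associative with unity. An inner automorphism of $D$ is a map $r\mapsto crc^{-1}$ with $c\in D^\times$. $D[t_1,t_2;\sigma_1,\sigma_2]$ is the skew polynomial ring in two commuting variables with $t_ia=\sigma_i(a)t_i$ for $a\in D$. For a ring $S\supseteq D$, $a\in S$ is automorphic over $D$ with respect to $\tau$ if $ab=\tau(b)a$ for all $b\in D$. Commuting $a_1,\ldots,a_m\in S$ are (left) algebraically independent over $D$ if monomials in them are left linearly independent over $D$. $S$ is automorphically normalizable over $D$ if there exist $m\ge0$ and commuting $a_1,\ldots,a_m\in S$, automorphic over $D$ with respect to pairwise commuting automorphisms, left algebraically independent over $D$, such that $S$ is finitely generated as a left module over the subring $D[a_1,\ldots,a_m]$ generated by $D\cup\{a_1,\ldots,a_m\}$. The tuple $(\sigma_1,\sigma_2)$ is automorphically normalizable over $D$ if every quotient of $D[t_1,t_2;\sigma_1,\sigma_2]$ by a proper two-sided ideal is automorphically normalizable over $D$. *)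

theory Defs
  imports "HOL-Algebra.Algebra"
begin

definition ring_automorphism :: "('a::division_ring \<Rightarrow> 'a) \<Rightarrow> bool" where
  "ring_automorphism f \<longleftrightarrow> bij f \<and> (\<forall>x y. f (x + y) = f x + f y)
     \<and> (\<forall>x y. f (x * y) = f x * f y) \<and> f 1 = 1"

definition inner_automorphism :: "('a::division_ring \<Rightarrow> 'a) \<Rightarrow> bool" where
  "inner_automorphism f \<longleftrightarrow> (\<exists>c. c \<noteq> 0 \<and> (\<forall>r. f r = c * r * inverse c))"

text \<open>Elements are finitely supported coefficient functions on exponent pairs (i,j),
  representing sums of a * t1^i * t2^j, with t_k a = s_k(a) t_k.\<close>

definition skew_poly2 ::
  "('a::division_ring \<Rightarrow> 'a) \<Rightarrow> ('a \<Rightarrow> 'a) \<Rightarrow> (nat \<times> nat \<Rightarrow> 'a) ring" where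
  "skew_poly2 s1 s2 =
    \<lparr> carrier = {p. finite {x. p x \<noteq> 0}},
      monoid.mult = (\<lambda>p q (n1, n2). \<Sum>(i, j) \<in> {0..n1} \<times> {0..n2}.
                 p (i, j) * (s1 ^^ i) ((s2 ^^ j) (q (n1 - i, n2 - j)))),
      monoid.one = (\<lambda>x. if x = (0, 0) then 1 else 0),
      ring.zero = (\<lambda>_. 0),
      ring.add = (\<lambda>p q x. p x + q x) \<rparr>"

definition skew_const :: "'a::zero \<Rightarrow> (nat \<times> nat \<Rightarrow> 'a)" where
  "skew_const d = (\<lambda>x. if x = (0, 0) then d else 0)"

definition automorphic_over ::
  "('b, 'c) ring_scheme \<Rightarrow> ('a \<Rightarrow> 'b) \<Rightarrow> ('a \<Rightarrow> 'a) \<Rightarrow> 'b \<Rightarrow> bool" where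
  "automorphic_over S \<iota> \<tau> x \<longleftrightarrow> (\<forall>b. x \<otimes>\<^bsub>S\<^esub> \<iota> b = \<iota> (\<tau> b) \<otimes>\<^bsub>S\<^esub> x)"

definition monomial_in :: "('b, 'c) ring_scheme \<Rightarrow> nat \<Rightarrow> (nat \<Rightarrow> 'b) \<Rightarrow> (nat \<Rightarrow> nat) \<Rightarrow> 'b" where
  "monomial_in S m a \<alpha> = finprod S (\<lambda>i. a i [^]\<^bsub>S\<^esub> \<alpha> i) {..<m}"

definition left_alg_indep ::
  "('b, 'c) ring_scheme \<Rightarrow> ('a::zero \<Rightarrow> 'b) \<Rightarrow> nat \<Rightarrow> (nat \<Rightarrow> 'b) \<Rightarrow> bool" where
  "left_alg_indep S \<iota> m a \<longleftrightarrow>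
     (\<forall>A c. finite A \<longrightarrow> A \<subseteq> {\<alpha>. \<forall>i\<ge>m. \<alpha> i = 0} \<longrightarrow>
        finsum S (\<lambda>\<alpha>. \<iota> (c \<alpha>) \<otimes>\<^bsub>S\<^esub> monomial_in S m a \<alpha>) A = \<zero>\<^bsub>S\<^esub> \<longrightarrow>
        (\<forall>\<alpha>\<in>A. c \<alpha> = 0))"

definition finitely_generated_left_module_over ::
  "('b, 'c) ring_scheme \<Rightarrow> 'b set \<Rightarrow> bool" where
  "finitely_generated_left_module_over S R0 \<longleftrightarrow>
     (\<exists>G. finite G \<and> G \<subseteq> carrier S \<and>
        (\<forall>s\<in>carrier S. \<exists>r. (\<forall>g\<in>G. r g \<in> R0) \<and> s = finsum S (\<lambda>g. r g \<otimes>\<^bsub>S\<^esub> g) G))"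

definition automorphically_normalizable ::
  "('b, 'c) ring_scheme \<Rightarrow> ('a::division_ring \<Rightarrow> 'b) \<Rightarrow> bool" where
  "automorphically_normalizable S \<iota> \<longleftrightarrow>
     (\<exists>m a \<tau>.
        (\<forall>i<m. a i \<in> carrier S) \<and>
        (\<forall>i<m. \<forall>j<m. a i \<otimes>\<^bsub>S\<^esub> a j = a j \<otimes>\<^bsub>S\<^esub> a i) \<and>
        (\<forall>i<m. ring_automorphism (\<tau> i)) \<and>
        (\<forall>i<m. \<forall>j<m. \<tau> i \<circ> \<tau> j = \<tau> j \<circ> \<tau> i) \<and>
        (\<forall>i<m. automorphic_over S \<iota> (\<tau> i) (a i)) \<and>
        left_alg_indep S \<iota> m a \<and>
        finitely_generated_left_module_over S
          (generate_ring S (\<iota> ` UNIV \<union> a ` {..<m})))"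

definition aut_normalizable_pair :: "('a::division_ring \<Rightarrow> 'a) \<Rightarrow> ('a \<Rightarrow> 'a) \<Rightarrow> bool" where
  "aut_normalizable_pair s1 s2 \<longleftrightarrow>
     (\<forall>I. ideal I (skew_poly2 s1 s2) \<and> I \<noteq> carrier (skew_poly2 s1 s2) \<longrightarrow>
        automorphically_normalizable (skew_poly2 s1 s2 Quot I)
          (\<lambda>d. I +>\<^bsub>skew_poly2 s1 s2\<^esub> skew_const d))"

end

theory Submission
  imports Defs
begin

text \<open>
  Divide D[t1,t2; s1,s2] by the ideal generated by t1 t2. A class of the quotient is determined
  by its coefficients at 1 and at the pure powers t1^n, t2^n (n > 0), its t1- and t2-terms.
  If a class is automorphic with respect to \<tau>, a nonzero coefficient at t1^k shows that \<tau> is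
  s1^k followed by an inner automorphism, and a nonzero coefficient at t2^l shows the same for
  s2^l; since s1^k s2^-l is not inner, an automorphic class lacks t1-terms or lacks t2-terms.
  The classes without t1-terms form a subring, and by degree reasons the quotient is not a
  finitely generated module over it. So a normalizing family contains an a_i without t2-terms
  and an a_j without t1-terms. Subtracting their constant terms c_i, c_j leaves elements on
  different axes, so (a_i - c_i)(a_j - c_j) = 0, a nontrivial left D-linear relation among
  1, a_i, a_j and a_i a_j.
\<close>

lemma funpow_additive:
  fixes f :: "'a::ab_group_add \<Rightarrow> 'a"
  assumes "additive f"
  shows "additive (f ^^ n)"
proof (induction n)
  case (Suc n)
  then show ?case
    by (simp add: additive_def additive.add[OF assms])
qed (simp add: additive_def)

lemma funpow_multiplicative:
  fixes f :: "'a::times \<Rightarrow> 'a"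
  assumes "\<And>x y. f (x * y) = f x * f y"
  shows "(f ^^ n) (x * y) = (f ^^ n) x * (f ^^ n) y"
  by (induction n arbitrary: x y) (simp_all add: assms)

lemma funpow_commute_funpow:
  assumes "f \<circ> g = g \<circ> f"
  shows "(f ^^ i) ((g ^^ j) x) = (g ^^ j) ((f ^^ i) x)"
proof -
  have "f ((g ^^ j) y) = (g ^^ j) (f y)" for y
    using fun_cong[OF assms] by (induction j) auto
  then show ?thesis by (induction i) auto
qed

lemma funpow_inv_into_cancel:
  fixes f :: "'a \<Rightarrow> 'a"
  assumes "surj f"
  shows "(f ^^ k) ((inv_into UNIV f ^^ k) x) = x"
proof (induction k arbitrary: x)
  case (Suc k)
  have "(f ^^ Suc k) ((inv_into UNIV f ^^ Suc k) x)
      = (f ^^ k) (f (inv_into UNIV f ((inv_into UNIV f ^^ k) x)))"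
    by (simp add: funpow_swap1)
  then show ?case by (simp add: surj_f_inv_f[OF assms] Suc)
qed simp

lemma sum_triangle_shift:
  fixes g :: "nat \<Rightarrow> nat \<Rightarrow> 'b::comm_monoid_add"
  shows "(\<Sum>i\<le>n. \<Sum>k\<le>i. g k i) = (\<Sum>k\<le>n. \<Sum>u\<le>n - k. g k (k + u))"
proof -
  have "(\<Sum>i\<le>n. \<Sum>k\<le>i. g k i) = (\<Sum>i\<le>n. \<Sum>k | k \<le> n \<and> k \<le> i. g k i)"
    by (intro sum.cong refl) (auto intro: arg_cong[where f="sum _"])
  also have "\<dots> = (\<Sum>k\<le>n. \<Sum>i | i \<le> n \<and> k \<le> i. g k i)"
    using sum.swap_restrict[of "{..n}" "{..n}" "\<lambda>i k. g k i" "\<lambda>i k. k \<le> i"] by simp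
  also have "\<dots> = (\<Sum>k\<le>n. \<Sum>u\<le>n - k. g k (k + u))"
  proof (rule sum.cong[OF refl])
    fix k assume "k \<in> {..n}"
    then have "(\<Sum>i | i \<le> n \<and> k \<le> i. g k i) = (\<Sum>i\<in>{0 + k..(n - k) + k}. g k i)"
      by (intro sum.cong) auto
    also have "\<dots> = (\<Sum>u\<in>{0..n - k}. g k (u + k))"
      by (rule sum.shift_bounds_cl_nat_ivl)
    finally show "(\<Sum>i | i \<le> n \<and> k \<le> i. g k i) = (\<Sum>u\<le>n - k. g k (k + u))"
      by (simp add: atLeast0AtMost add.commute)
  qed
  finally show ?thesis .
qed

lemma (in ring) mult_eq_of_shifted_mult_zero:
  assumes "x \<in> carrier R" "y \<in> carrier R" "u \<in> carrier R" "v \<in> carrier R"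
    and "(x \<ominus> u) \<otimes> (y \<ominus> v) = \<zero>"
  shows "x \<otimes> y = x \<otimes> v \<oplus> u \<otimes> y \<ominus> u \<otimes> v"
proof -
  have "(x \<ominus> u) \<otimes> (y \<ominus> v) = x \<otimes> y \<ominus> (x \<otimes> v \<oplus> u \<otimes> y \<ominus> u \<otimes> v)"
    using assms(1-4) by (simp add: minus_eq l_distr r_distr l_minus r_minus a_ac minus_add)
  then show ?thesis
    using assms by (metis minus_closed add.m_closed m_closed r_right_minus_eq)
qed

lemma (in monoid) finprod_insert_commuting:
  assumes "finite F" "x \<notin> F" "f \<in> insert x F \<rightarrow> carrier G"
    and "\<And>u v. u \<in> insert x F \<Longrightarrow> v \<in> insert x F \<Longrightarrow> f u \<otimes> f v = f v \<otimes> f u"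
  shows "finprod G f (insert x F) = f x \<otimes> finprod G f F"
proof -
  have "LCD (insert x F) (carrier G) ((\<otimes>) \<circ> f)"
  proof
    fix u v z assume uv: "u \<in> insert x F" "v \<in> insert x F" and "z \<in> carrier G"
    moreover have "f u \<in> carrier G" "f v \<in> carrier G" using uv assms(3) by auto
    ultimately show "((\<otimes>) \<circ> f) u (((\<otimes>) \<circ> f) v z) = ((\<otimes>) \<circ> f) v (((\<otimes>) \<circ> f) u z)"
      using assms(4)[OF uv] by (simp add: m_assoc[symmetric])
  qed (use assms(3) in auto)
  then have "foldD (carrier G) ((\<otimes>) \<circ> f) \<one> (insert x F)
      = ((\<otimes>) \<circ> f) x (foldD (carrier G) ((\<otimes>) \<circ> f) \<one> F)"
    by (rule LCD.foldD_insert) (use assms(1,2) in auto)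
  then show ?thesis
    using assms(1) by (simp add: finprod_def)
qed

lemma (in monoid) finprod_ones:
  assumes "finite F" "\<And>u. u \<in> F \<Longrightarrow> f u = \<one>"
  shows "finprod G f F = \<one>"
  using assms
proof (induction F rule: finite_induct)
  case empty
  then show ?case by (simp add: finprod_def)
next
  case (insert x F)
  then have "finprod G f (insert x F) = f x \<otimes> finprod G f F"
    by (intro finprod_insert_commuting) auto
  then show ?case using insert by simp
qed

lemma (in ring) monomial_in_pair:
  assumes "i < m" "j < m" "i \<noteq> j" "a i \<in> carrier R" "a j \<in> carrier R"
    and "a i \<otimes> a j = a j \<otimes> a i"
    and "\<And>k. k \<noteq> i \<Longrightarrow> k \<noteq> j \<Longrightarrow> \<alpha> k = 0" "\<alpha> i \<le> 1" "\<alpha> j \<le> 1"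
  shows "monomial_in R m a \<alpha> = a i [^] \<alpha> i \<otimes> a j [^] \<alpha> j"
proof -
  define f where "f k = a k [^] \<alpha> k" for k
  have pow_le_1: "b [^] n \<in> {\<one>, b}" if "n \<le> (1::nat)" "b \<in> carrier R" for b n
    using that by (cases n) auto
  have f_values: "f k \<in> {\<one>, a i, a j}" for k
    using pow_le_1[OF assms(8,4)] pow_le_1[OF assms(9,5)] assms(7) unfolding f_def
    by (cases "k = i \<or> k = j") auto
  have f_in: "f k \<in> carrier R" for k
    using f_values[of k] assms(4,5) by auto
  then have f_carrier: "f \<in> A \<rightarrow> carrier R" for A
    by simp
  have f_commute: "f u \<otimes> f v = f v \<otimes> f u" for u v
    using f_values[of u] f_values[of v] assms(4-6) by auto
  define rest where "rest = {..<m} - {i, j}"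
  have split: "{..<m} = insert i (insert j rest)"
    using assms(1,2) unfolding rest_def by auto
  have rest: "finite rest" "i \<notin> insert j rest" "j \<notin> rest"
    using assms(3) unfolding rest_def by auto
  have "finprod R f {..<m} = f i \<otimes> finprod R f (insert j rest)"
    unfolding split using rest by (intro finprod_insert_commuting f_carrier f_commute) auto
  also have "finprod R f (insert j rest) = f j \<otimes> finprod R f rest"
    using rest by (intro finprod_insert_commuting f_carrier f_commute) auto
  also have "finprod R f rest = \<one>"
    using assms(7) by (intro finprod_ones) (auto simp: rest_def f_def)
  finally show ?thesis
    using f_in[of j] unfolding monomial_in_def f_def by simp
qed

lemma left_alg_indepD:
  assumes "left_alg_indep S \<iota> m a" "finite A" "A \<subseteq> {\<alpha>. \<forall>i\<ge>m. \<alpha> i = 0}"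
    and "finsum S (\<lambda>\<alpha>. \<iota> (c \<alpha>) \<otimes>\<^bsub>S\<^esub> monomial_in S m a \<alpha>) A = \<zero>\<^bsub>S\<^esub>" "\<alpha> \<in> A"
  shows "c \<alpha> = 0"
  using assms unfolding left_alg_indep_def by blast

lemma (in ring) left_alg_indep_no_bilinear_relation:
  fixes \<iota> :: "'d::{zero_neq_one, uminus} \<Rightarrow> 'a"
  assumes indep: "left_alg_indep R \<iota> m a"
    and ij: "i < m" "j < m" "i \<noteq> j"
    and a: "a i \<in> carrier R" "a j \<in> carrier R" "a i \<otimes> a j = a j \<otimes> a i"
    and \<iota>: "\<And>d. \<iota> d \<in> carrier R" "\<iota> 1 = \<one>" "\<And>d. \<iota> (- d) = \<ominus> \<iota> d"
  shows "a i \<otimes> a j \<noteq> \<iota> x \<otimes> a i \<oplus> \<iota> y \<otimes> a j \<oplus> \<iota> z"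
proof
  assume relation: "a i \<otimes> a j = \<iota> x \<otimes> a i \<oplus> \<iota> y \<otimes> a j \<oplus> \<iota> z"
  define e :: "nat set \<Rightarrow> nat \<Rightarrow> nat" where "e K k = of_bool (k \<in> K)" for K k
  have e_eq_iff: "e K = e L \<longleftrightarrow> K = L" for K L
    by (auto simp: e_def fun_eq_iff)
  have monomial: "monomial_in R m a (e K) =
      (if i \<in> K then a i else \<one>) \<otimes> (if j \<in> K then a j else \<one>)" if "K \<subseteq> {i, j}" for K
  proof -
    have "\<And>k. k \<noteq> i \<Longrightarrow> k \<noteq> j \<Longrightarrow> e K k = 0"
      using that by (auto simp: e_def)
    then show ?thesis
      using monomial_in_pair[OF ij a, of "e K"] a by (simp add: e_def)
  qed
  define c where "c \<alpha> = (if \<alpha> = e {i, j} then 1 else if \<alpha> = e {i} then - x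
      else if \<alpha> = e {j} then - y else - z)" for \<alpha>
  define A where "A = {e {i, j}, e {i}, e {j}, e {}}"
  define F where "F \<alpha> = \<iota> (c \<alpha>) \<otimes> monomial_in R m a \<alpha>" for \<alpha>
  have distinct: "e {i, j} \<noteq> e {i}" "e {i, j} \<noteq> e {j}" "e {i, j} \<noteq> e {}"
      "e {i} \<noteq> e {j}" "e {i} \<noteq> e {}" "e {j} \<noteq> e {}"
    using ij(3) by (auto simp: e_eq_iff doubleton_eq_iff)
  have terms: "F (e {i, j}) = a i \<otimes> a j" "F (e {i}) = \<ominus> (\<iota> x \<otimes> a i)"
      "F (e {j}) = \<ominus> (\<iota> y \<otimes> a j)" "F (e {}) = \<ominus> \<iota> z"
    using distinct ij(3) a \<iota> by (simp_all add: F_def c_def monomial l_minus)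
  have F_carrier: "F (e {i, j}) \<in> carrier R" "F (e {i}) \<in> carrier R"
      "F (e {j}) \<in> carrier R" "F (e {}) \<in> carrier R"
    using a(1,2) \<iota>(1) by (simp_all add: terms)
  have "finsum R F A = F (e {i, j}) \<oplus> (F (e {i}) \<oplus> (F (e {j}) \<oplus> F (e {})))"
    using F_carrier distinct unfolding A_def by (simp add: Pi_iff)
  also have "\<dots> = a i \<otimes> a j \<oplus> (\<ominus> (\<iota> x \<otimes> a i) \<oplus> (\<ominus> (\<iota> y \<otimes> a j) \<oplus> \<ominus> \<iota> z))"
    by (simp only: terms)
  also have "\<dots> = \<zero>"
    using a \<iota> by (simp add: relation a_assoc minus_add[symmetric] r_neg)
  finally have sum: "finsum R F A = \<zero>" .
  have support: "A \<subseteq> {\<alpha>. \<forall>k\<ge>m. \<alpha> k = 0}"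
    using ij by (auto simp: A_def e_def)
  have "c (e {i, j}) = 0"
    using left_alg_indepD[OF indep _ support sum[unfolded F_def]] by (simp add: A_def)
  then show False
    unfolding c_def by simp
qed

lemma inner_automorphism_of_intertwiners:
  fixes f g h \<tau> :: "'a::division_ring \<Rightarrow> 'a"
  assumes "a \<noteq> 0" "c \<noteq> 0" "\<And>x. a * f x = \<tau> x * a" "\<And>x. c * g x = \<tau> x * c"
    and "\<And>x. g (h x) = x"
  shows "inner_automorphism (f \<circ> h)"
proof -
  have f: "f y = inverse a * \<tau> y * a" for y
  proof -
    have "f y = inverse a * (a * f y)"
      using assms(1) by (simp add: mult.assoc[symmetric])
    then show ?thesis
      by (simp add: assms(3) mult.assoc)
  qed
  have \<tau>: "\<tau> y = c * g y * inverse c" for y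
  proof -
    have "\<tau> y = \<tau> y * c * inverse c"
      using assms(2) by (simp add: mult.assoc)
    then show ?thesis
      by (simp add: assms(4)[symmetric])
  qed
  have "(f \<circ> h) x = (inverse a * c) * x * inverse (inverse a * c)" for x
    using assms(1,2) by (simp add: f \<tau> assms(5) nonzero_inverse_mult_distrib mult.assoc)
  moreover have "inverse a * c \<noteq> 0"
    using assms(1,2) by simp
  ultimately show ?thesis
    unfolding inner_automorphism_def by blast
qed

definition axis :: "bool \<Rightarrow> nat \<Rightarrow> nat \<times> nat" where
  "axis e n = (if e then (n, 0) else (0, n))"

definition on_axes :: "nat \<times> nat \<Rightarrow> bool" where
  "on_axes x \<longleftrightarrow> (\<exists>e n. x = axis e n)"

lemma axis_0 [simp]: "axis e 0 = (0, 0)"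
  by (simp add: axis_def)

lemma axis_eq_iff [simp]: "axis e n = axis e k \<longleftrightarrow> n = k"
  by (auto simp: axis_def)

lemma axis_eq_0_iff [simp]: "axis e n = (0, 0) \<longleftrightarrow> n = 0"
  by (auto simp: axis_def)

definition axes_part :: "(nat \<times> nat \<Rightarrow> 'a::zero) \<Rightarrow> nat \<times> nat \<Rightarrow> 'a" where
  "axes_part p x = (if on_axes x then p x else 0)"

text \<open>Meant for classes modulo the polynomials vanishing on the axes, on which all members
  have the same axis coefficients.\<close>
definition qcoeff :: "(nat \<times> nat \<Rightarrow> 'a::zero) set \<Rightarrow> nat \<times> nat \<Rightarrow> 'a" where
  "qcoeff U = axes_part (SOME p. p \<in> U)"

definition avoids_axis :: "bool \<Rightarrow> (nat \<times> nat \<Rightarrow> 'a::zero) set \<Rightarrow> bool" where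
  "avoids_axis e U \<longleftrightarrow> (\<forall>n>0. qcoeff U (axis e n) = 0)"

lemma qcoeff_off_axes: "\<not> on_axes x \<Longrightarrow> qcoeff U x = 0"
  by (simp add: qcoeff_def axes_part_def)

lemma on_axes_0 [simp]: "on_axes (0, 0)"
  by (metis axis_0 on_axes_def)

lemma axes_part_skew_const [simp]: "axes_part (skew_const d) = skew_const d"
  by (auto simp: fun_eq_iff axes_part_def skew_const_def)

lemma axes_part_axis [simp]: "axes_part p (axis e n) = p (axis e n)"
  by (auto simp: axes_part_def on_axes_def)

lemma skew_const_axis: "skew_const d (axis e n) = (if n = 0 then d else 0)"
  by (simp add: skew_const_def)

locale commuting_endomorphisms =
  fixes s1 s2 :: "'a::division_ring \<Rightarrow> 'a"
  assumes additive_s1: "additive s1" and additive_s2: "additive s2"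
    and mult_s1: "s1 (x * y) = s1 x * s1 y" and mult_s2: "s2 (x * y) = s2 x * s2 y"
    and one_s1: "s1 1 = 1" and one_s2: "s2 1 = 1"
    and commute: "s1 \<circ> s2 = s2 \<circ> s1"
begin

definition twist :: "nat \<Rightarrow> nat \<Rightarrow> 'a \<Rightarrow> 'a" where
  "twist i j = (s1 ^^ i) \<circ> (s2 ^^ j)"

lemma additive_twist: "additive (twist i j)"
  using funpow_additive[OF additive_s1, of i] funpow_additive[OF additive_s2, of j]
  unfolding twist_def additive_def by simp

lemmas twist_add = additive.add[OF additive_twist]
  and twist_zero [simp] = additive.zero[OF additive_twist]
  and twist_sum = additive.sum[OF additive_twist]

lemma twist_mult: "twist i j (x * y) = twist i j x * twist i j y"
  unfolding twist_def by (simp add: funpow_multiplicative mult_s1 mult_s2)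

lemma twist_one [simp]: "twist i j 1 = 1"
proof -
  have "(f ^^ n) 1 = 1" if "f 1 = 1" for f :: "'a \<Rightarrow> 'a" and n
    using that by (induction n) auto
  then show ?thesis
    unfolding twist_def by (simp add: one_s1 one_s2)
qed

lemma twist_0_0 [simp]: "twist 0 0 x = x"
  unfolding twist_def by simp

lemma twist_twist: "twist i j (twist k l x) = twist (i + k) (j + l) x"
  unfolding twist_def by (simp add: funpow_add funpow_commute_funpow[OF commute])

abbreviation P where "P \<equiv> skew_poly2 s1 s2"

lemma skew_poly2_simps:
  "carrier P = {p. finite {x. p x \<noteq> 0}}"
  "\<one>\<^bsub>P\<^esub> = (\<lambda>x. if x = (0, 0) then 1 else 0)"
  "\<zero>\<^bsub>P\<^esub> = (\<lambda>_. 0)"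
  "p \<oplus>\<^bsub>P\<^esub> q = (\<lambda>x. p x + q x)"
  unfolding skew_poly2_def by simp_all

lemma skew_poly2_mult_apply:
  "(p \<otimes>\<^bsub>P\<^esub> q) (n1, n2) = (\<Sum>i\<le>n1. \<Sum>j\<le>n2. p (i, j) * twist i j (q (n1 - i, n2 - j)))"
  unfolding skew_poly2_def twist_def by (simp add: sum.cartesian_product atLeast0AtMost)

lemma skew_poly2_mult_closed:
  assumes "p \<in> carrier P" "q \<in> carrier P"
  shows "p \<otimes>\<^bsub>P\<^esub> q \<in> carrier P"
proof -
  let ?supp = "\<lambda>p. {x. p x \<noteq> 0}"
  have "?supp (p \<otimes>\<^bsub>P\<^esub> q) \<subseteq> (\<lambda>((i, j), (k, l)). (i + k, j + l)) ` (?supp p \<times> ?supp q)"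
  proof clarify
    fix n1 n2 assume "(p \<otimes>\<^bsub>P\<^esub> q) (n1, n2) \<noteq> 0"
    then obtain i j where "i \<le> n1" "j \<le> n2" "p (i, j) * twist i j (q (n1 - i, n2 - j)) \<noteq> 0"
      unfolding skew_poly2_mult_apply by (auto elim!: sum.not_neutral_contains_not_neutral)
    then show "(n1, n2) \<in> (\<lambda>((i, j), (k, l)). (i + k, j + l)) ` (?supp p \<times> ?supp q)"
      by (intro image_eqI[where x = "((i, j), (n1 - i, n2 - j))"]) auto
  qed
  moreover have "finite (?supp p \<times> ?supp q)"
    using assms by (simp add: skew_poly2_simps)
  ultimately show ?thesis
    unfolding skew_poly2_simps(1) by (auto intro: finite_subset)
qed

lemma skew_poly2_l_one: "\<one>\<^bsub>P\<^esub> \<otimes>\<^bsub>P\<^esub> q = q"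
proof (intro ext, clarify)
  fix n1 n2
  have "(\<one>\<^bsub>P\<^esub> \<otimes>\<^bsub>P\<^esub> q) (n1, n2)
      = (\<Sum>i\<le>n1. \<Sum>j\<le>n2. if j = 0 then if i = 0 then q (n1, n2) else 0 else 0)"
    unfolding skew_poly2_mult_apply by (intro sum.cong refl) (auto simp: skew_poly2_simps)
  then show "(\<one>\<^bsub>P\<^esub> \<otimes>\<^bsub>P\<^esub> q) (n1, n2) = q (n1, n2)"
    by simp
qed

lemma skew_poly2_r_one: "p \<otimes>\<^bsub>P\<^esub> \<one>\<^bsub>P\<^esub> = p"
proof (intro ext, clarify)
  fix n1 n2
  have "(p \<otimes>\<^bsub>P\<^esub> \<one>\<^bsub>P\<^esub>) (n1, n2)
      = (\<Sum>i\<le>n1. \<Sum>j\<le>n2. if j = n2 then if i = n1 then p (n1, n2) else 0 else 0)"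
    unfolding skew_poly2_mult_apply by (intro sum.cong refl) (auto simp: skew_poly2_simps)
  then show "(p \<otimes>\<^bsub>P\<^esub> \<one>\<^bsub>P\<^esub>) (n1, n2) = p (n1, n2)"
    by simp
qed

lemma skew_poly2_m_assoc: "(p \<otimes>\<^bsub>P\<^esub> q) \<otimes>\<^bsub>P\<^esub> r = p \<otimes>\<^bsub>P\<^esub> (q \<otimes>\<^bsub>P\<^esub> r)"
proof (intro ext, clarify)
  fix n1 n2
  define F where "F k l i j =
    p (k, l) * twist k l (q (i - k, j - l)) * twist i j (r (n1 - i, n2 - j))" for k l i j
  have "((p \<otimes>\<^bsub>P\<^esub> q) \<otimes>\<^bsub>P\<^esub> r) (n1, n2) = (\<Sum>i\<le>n1. \<Sum>j\<le>n2. \<Sum>k\<le>i. \<Sum>l\<le>j. F k l i j)"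
    unfolding skew_poly2_mult_apply F_def by (simp add: sum_distrib_right)
  also have "\<dots> = (\<Sum>i\<le>n1. \<Sum>k\<le>i. \<Sum>j\<le>n2. \<Sum>l\<le>j. F k l i j)"
    by (rule sum.cong[OF refl], rule sum.swap)
  also have "\<dots> = (\<Sum>k\<le>n1. \<Sum>u\<le>n1 - k. \<Sum>j\<le>n2. \<Sum>l\<le>j. F k l (k + u) j)"
    by (rule sum_triangle_shift)
  also have "\<dots> = (\<Sum>k\<le>n1. \<Sum>u\<le>n1 - k. \<Sum>l\<le>n2. \<Sum>v\<le>n2 - l. F k l (k + u) (l + v))"
    by (intro sum.cong refl sum_triangle_shift)
  also have "\<dots> = (\<Sum>k\<le>n1. \<Sum>l\<le>n2. \<Sum>u\<le>n1 - k. \<Sum>v\<le>n2 - l. F k l (k + u) (l + v))"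
    by (rule sum.cong[OF refl], rule sum.swap)
  also have "\<dots> = (\<Sum>k\<le>n1. \<Sum>l\<le>n2. p (k, l) * twist k l
      (\<Sum>u\<le>n1 - k. \<Sum>v\<le>n2 - l. q (u, v) * twist u v (r (n1 - k - u, n2 - l - v))))"
    unfolding F_def twist_sum twist_mult twist_twist sum_distrib_left
    by (simp add: mult.assoc diff_diff_add)
  also have "\<dots> = (p \<otimes>\<^bsub>P\<^esub> (q \<otimes>\<^bsub>P\<^esub> r)) (n1, n2)"
    by (simp only: skew_poly2_mult_apply)
  finally show "((p \<otimes>\<^bsub>P\<^esub> q) \<otimes>\<^bsub>P\<^esub> r) (n1, n2) = (p \<otimes>\<^bsub>P\<^esub> (q \<otimes>\<^bsub>P\<^esub> r)) (n1, n2)" .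
qed

lemma skew_poly2_l_distr: "(p \<oplus>\<^bsub>P\<^esub> q) \<otimes>\<^bsub>P\<^esub> r = p \<otimes>\<^bsub>P\<^esub> r \<oplus>\<^bsub>P\<^esub> q \<otimes>\<^bsub>P\<^esub> r"
  by (intro ext, clarify) (simp only: skew_poly2_mult_apply skew_poly2_simps(4) distrib_right sum.distrib)

lemma skew_poly2_r_distr: "r \<otimes>\<^bsub>P\<^esub> (p \<oplus>\<^bsub>P\<^esub> q) = r \<otimes>\<^bsub>P\<^esub> p \<oplus>\<^bsub>P\<^esub> r \<otimes>\<^bsub>P\<^esub> q"
  by (intro ext, clarify) (simp only: skew_poly2_mult_apply skew_poly2_simps(4) distrib_left sum.distrib twist_add)

lemma ring_skew_poly2: "ring P"
proof (rule ringI)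
  show "abelian_group P"
  proof (rule abelian_groupI)
    fix p q assume "p \<in> carrier P" "q \<in> carrier P"
    moreover have "{x. p x + q x \<noteq> 0} \<subseteq> {x. p x \<noteq> 0} \<union> {x. q x \<noteq> 0}" by auto
    ultimately show "p \<oplus>\<^bsub>P\<^esub> q \<in> carrier P"
      unfolding skew_poly2_simps by (auto intro: finite_subset)
  next
    fix p assume "p \<in> carrier P"
    then show "\<exists>q\<in>carrier P. q \<oplus>\<^bsub>P\<^esub> p = \<zero>\<^bsub>P\<^esub>"
      unfolding skew_poly2_simps by (intro bexI[of _ "\<lambda>x. - p x"]) auto
  qed (auto simp: skew_poly2_simps add.assoc add.commute)
next
  have "{x. (if x = (0, 0) then 1 else 0) \<noteq> (0::'a)} = {(0, 0)}" by auto
  then have "\<one>\<^bsub>P\<^esub> \<in> carrier P"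
    by (simp add: skew_poly2_simps)
  then show "monoid P"
    by (intro monoidI)
      (simp_all add: skew_poly2_mult_closed skew_poly2_m_assoc skew_poly2_l_one skew_poly2_r_one)
qed (simp_all add: skew_poly2_l_distr skew_poly2_r_distr)

definition axis_endo :: "bool \<Rightarrow> 'a \<Rightarrow> 'a" where
  "axis_endo e = (if e then s1 else s2)"

lemma axis_endo_funpow_zero [simp]: "(axis_endo e ^^ j) 0 = 0"
  using twist_zero[of j 0] twist_zero[of 0 j] by (simp add: axis_endo_def twist_def)

lemma skew_poly2_mult_axis:
  "(p \<otimes>\<^bsub>P\<^esub> q) (axis e n) = (\<Sum>j\<le>n. p (axis e j) * (axis_endo e ^^ j) (q (axis e (n - j))))"
  by (cases e) (simp_all add: axis_def axis_endo_def skew_poly2_mult_apply twist_def)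

text \<open>The ideal generated by t1 t2.\<close>
definition off_axes_ideal :: "(nat \<times> nat \<Rightarrow> 'a) set" where
  "off_axes_ideal = {p \<in> carrier P. \<forall>e n. p (axis e n) = 0}"

lemma skew_poly2_a_inv:
  assumes "p \<in> carrier P"
  shows "\<ominus>\<^bsub>P\<^esub> p = (\<lambda>x. - p x)"
proof -
  interpret ring P by (rule ring_skew_poly2)
  have "(\<lambda>x. - p x) \<in> carrier P" "(\<lambda>x. - p x) \<oplus>\<^bsub>P\<^esub> p = \<zero>\<^bsub>P\<^esub>"
    using assms by (simp_all add: skew_poly2_simps)
  then show ?thesis
    using minus_equality assms by blast
qed

lemma ideal_off_axes: "ideal off_axes_ideal P"
proof -
  interpret ring P by (rule ring_skew_poly2)
  have mult_closed: "p \<otimes>\<^bsub>P\<^esub> q \<in> off_axes_ideal"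
    if "p \<in> carrier P" "q \<in> carrier P" "p \<in> off_axes_ideal \<or> q \<in> off_axes_ideal" for p q
    using that unfolding off_axes_ideal_def by (auto simp: skew_poly2_mult_axis)
  show ?thesis
  proof (rule idealI)
    show "subgroup off_axes_ideal (add_monoid P)"
    proof (rule add.subgroupI)
      have "\<zero>\<^bsub>P\<^esub> \<in> off_axes_ideal"
        by (simp add: off_axes_ideal_def skew_poly2_simps)
      then show "off_axes_ideal \<noteq> {}" by blast
    next
      fix p assume "p \<in> off_axes_ideal"
      then have p: "p \<in> carrier P" "\<And>e n. p (axis e n) = 0"
        unfolding off_axes_ideal_def by auto
      then show "\<ominus>\<^bsub>P\<^esub> p \<in> off_axes_ideal"
        unfolding off_axes_ideal_def using add.inv_closed[OF p(1)] by (simp add: skew_poly2_a_inv)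
    next
      fix p q assume "p \<in> off_axes_ideal" "q \<in> off_axes_ideal"
      then show "p \<oplus>\<^bsub>P\<^esub> q \<in> off_axes_ideal"
        unfolding off_axes_ideal_def using add.m_closed[of p q] by (simp add: skew_poly2_simps(4))
    qed (auto simp: off_axes_ideal_def)
  qed (use ring_skew_poly2 mult_closed off_axes_ideal_def in auto)
qed

lemma one_notin_off_axes_ideal: "\<one>\<^bsub>P\<^esub> \<notin> off_axes_ideal"
  unfolding off_axes_ideal_def using axis_0[of True] by (auto simp: skew_poly2_simps)

abbreviation Q where "Q \<equiv> P Quot off_axes_ideal"

abbreviation cls where "cls p \<equiv> off_axes_ideal +>\<^bsub>P\<^esub> p"

abbreviation iota where "iota d \<equiv> cls (skew_const d)"

lemma ring_Q: "ring Q"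
  by (rule ideal.quotient_is_ring[OF ideal_off_axes])

lemma cls_ring_hom: "cls \<in> ring_hom P Q"
  by (rule ideal.rcos_ring_hom[OF ideal_off_axes])

lemma quotient_carrierE:
  assumes "U \<in> carrier Q"
  obtains p where "p \<in> carrier P" "U = cls p"
  using assms unfolding FactRing_def A_RCOSETS_def' by auto

lemma cls_in_carrier: "p \<in> carrier P \<Longrightarrow> cls p \<in> carrier Q"
  unfolding FactRing_def A_RCOSETS_def' by auto

lemma axes_part_cls_member:
  assumes "q \<in> cls p"
  shows "axes_part q = axes_part p"
proof -
  obtain h where "h \<in> off_axes_ideal" "q = h \<oplus>\<^bsub>P\<^esub> p"
    using assms unfolding a_r_coset_def' by auto
  then show ?thesis
    unfolding axes_part_def on_axes_def off_axes_ideal_def skew_poly2_simps by (auto simp: fun_eq_iff)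
qed

lemma qcoeff_cls:
  assumes "p \<in> carrier P"
  shows "qcoeff (cls p) = axes_part p"
proof -
  interpret ideal off_axes_ideal P by (rule ideal_off_axes)
  have "p \<in> cls p"
    using assms by (rule a_rcos_self)
  then have "(SOME q. q \<in> cls p) \<in> cls p"
    by (rule someI[where P = "\<lambda>q. q \<in> cls p"])
  then show ?thesis
    unfolding qcoeff_def by (rule axes_part_cls_member)
qed

lemma cls_eqI:
  assumes "p \<in> carrier P" "q \<in> carrier P" "axes_part p = axes_part q"
  shows "cls p = cls q"
proof -
  interpret ring P by (rule ring_skew_poly2)
  have "p \<ominus>\<^bsub>P\<^esub> q = (\<lambda>x. p x - q x)"
    using assms(2) by (simp add: a_minus_def skew_poly2_a_inv skew_poly2_simps(4))
  moreover have "p (axis e n) = q (axis e n)" for e n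
    using fun_cong[OF assms(3), of "axis e n"] by simp
  ultimately have "p \<ominus>\<^bsub>P\<^esub> q \<in> off_axes_ideal"
    using minus_closed[OF assms(1,2)] by (simp add: off_axes_ideal_def)
  then show ?thesis
    using quotient_eq_iff_same_a_r_cos[OF ideal_off_axes assms(1,2)] by blast
qed

lemma qcoeff_inject:
  assumes "U \<in> carrier Q" "V \<in> carrier Q" "qcoeff U = qcoeff V"
  shows "U = V"
proof -
  obtain p q where "p \<in> carrier P" "q \<in> carrier P" "U = cls p" "V = cls q"
    using assms(1,2) by (metis quotient_carrierE)
  then show ?thesis
    using assms(3) by (metis cls_eqI qcoeff_cls)
qed

lemma qcoeff_add:
  assumes "U \<in> carrier Q" "V \<in> carrier Q"
  shows "qcoeff (U \<oplus>\<^bsub>Q\<^esub> V) x = qcoeff U x + qcoeff V x"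
proof -
  interpret ring P by (rule ring_skew_poly2)
  obtain p q where pq: "p \<in> carrier P" "q \<in> carrier P" "U = cls p" "V = cls q"
    using assms by (metis quotient_carrierE)
  then have "qcoeff (U \<oplus>\<^bsub>Q\<^esub> V) = axes_part (p \<oplus>\<^bsub>P\<^esub> q)"
    using ring_hom_add[OF cls_ring_hom pq(1,2), symmetric] pq by (simp add: qcoeff_cls)
  then show ?thesis
    using pq by (simp add: qcoeff_cls axes_part_def skew_poly2_simps(4))
qed

lemma qcoeff_mult_axis:
  assumes "U \<in> carrier Q" "V \<in> carrier Q"
  shows "qcoeff (U \<otimes>\<^bsub>Q\<^esub> V) (axis e n)
    = (\<Sum>j\<le>n. qcoeff U (axis e j) * (axis_endo e ^^ j) (qcoeff V (axis e (n - j))))"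
proof -
  obtain p q where pq: "p \<in> carrier P" "q \<in> carrier P" "U = cls p" "V = cls q"
    using assms by (metis quotient_carrierE)
  then have "U \<otimes>\<^bsub>Q\<^esub> V = cls (p \<otimes>\<^bsub>P\<^esub> q)"
    using ring_hom_mult[OF cls_ring_hom] by simp
  then show ?thesis
    using pq by (simp add: qcoeff_cls skew_poly2_mult_closed skew_poly2_mult_axis)
qed

lemma qcoeff_zero: "qcoeff \<zero>\<^bsub>Q\<^esub> x = 0"
proof -
  interpret ring P by (rule ring_skew_poly2)
  have "qcoeff \<zero>\<^bsub>Q\<^esub> = axes_part \<zero>\<^bsub>P\<^esub>"
    using ring_hom_zero[OF cls_ring_hom ring_skew_poly2 ring_Q] by (simp add: qcoeff_cls[symmetric])
  then show ?thesis
    by (simp add: axes_part_def skew_poly2_simps(3))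
qed

lemma qcoeff_one: "qcoeff \<one>\<^bsub>Q\<^esub> = skew_const 1"
proof -
  interpret ring P by (rule ring_skew_poly2)
  have "qcoeff \<one>\<^bsub>Q\<^esub> = axes_part \<one>\<^bsub>P\<^esub>"
    using ring_hom_one[OF cls_ring_hom] by (simp add: qcoeff_cls[symmetric])
  then show ?thesis
    by (simp add: skew_poly2_simps(2) flip: skew_const_def)
qed

lemma qcoeff_neg:
  assumes "U \<in> carrier Q"
  shows "qcoeff (\<ominus>\<^bsub>Q\<^esub> U) x = - qcoeff U x"
proof -
  interpret ring Q by (rule ring_Q)
  have "qcoeff (\<ominus>\<^bsub>Q\<^esub> U) x + qcoeff U x = 0"
    using assms by (simp add: qcoeff_add[symmetric] qcoeff_zero l_neg)
  then show ?thesis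
    by (simp add: add_eq_0_iff2)
qed

lemma qcoeff_finsum:
  assumes "finite A" "f \<in> A \<rightarrow> carrier Q"
  shows "qcoeff (finsum Q f A) x = (\<Sum>a\<in>A. qcoeff (f a) x)"
  using assms
proof (induction A rule: finite_induct)
  case empty
  interpret ring Q by (rule ring_Q)
  show ?case by (simp add: qcoeff_zero)
next
  case (insert a A)
  interpret ring Q by (rule ring_Q)
  from insert show ?case
    by (simp add: finsum_insert qcoeff_add finsum_closed)
qed

lemma finite_qcoeff_support:
  assumes "U \<in> carrier Q"
  shows "finite {x. qcoeff U x \<noteq> 0}"
proof -
  obtain p where "p \<in> carrier P" "U = cls p"
    using assms by (rule quotient_carrierE)
  then have "{x. qcoeff U x \<noteq> 0} \<subseteq> {x. p x \<noteq> 0}" "finite {x. p x \<noteq> 0}"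
    by (auto simp: qcoeff_cls axes_part_def skew_poly2_simps(1))
  then show ?thesis
    by (rule finite_subset)
qed

lemma skew_const_carrier: "skew_const d \<in> carrier P"
proof -
  have "{x. skew_const d x \<noteq> 0} \<subseteq> {(0, 0)}"
    by (auto simp: skew_const_def)
  then show ?thesis
    unfolding skew_poly2_simps(1) by (auto intro: finite_subset)
qed

lemma iota_carrier: "iota d \<in> carrier Q"
  by (rule cls_in_carrier[OF skew_const_carrier])

lemma qcoeff_iota: "qcoeff (iota d) = skew_const d"
  by (simp add: qcoeff_cls[OF skew_const_carrier])

lemma skew_const_mult: "skew_const d \<otimes>\<^bsub>P\<^esub> skew_const c = skew_const (d * c)"
proof (intro ext, clarify)
  fix n1 n2
  have "(skew_const d \<otimes>\<^bsub>P\<^esub> skew_const c) (n1, n2)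
      = (\<Sum>i\<le>n1. \<Sum>j\<le>n2. if j = 0 then if i = 0 then d * skew_const c (n1, n2) else 0 else 0)"
    unfolding skew_poly2_mult_apply by (intro sum.cong refl) (auto simp: skew_const_def)
  then show "(skew_const d \<otimes>\<^bsub>P\<^esub> skew_const c) (n1, n2) = skew_const (d * c) (n1, n2)"
    by (simp add: skew_const_def)
qed

lemma iota_mult: "iota d \<otimes>\<^bsub>Q\<^esub> iota c = iota (d * c)"
  using ring_hom_mult[OF cls_ring_hom skew_const_carrier skew_const_carrier] by (simp add: skew_const_mult)

lemma iota_one: "iota 1 = \<one>\<^bsub>Q\<^esub>"
proof -
  have "skew_const 1 = \<one>\<^bsub>P\<^esub>"
    by (simp add: skew_const_def skew_poly2_simps(2))
  then show ?thesis
    using ring_hom_one[OF cls_ring_hom] by simp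
qed

lemma iota_neg: "iota (- d) = \<ominus>\<^bsub>Q\<^esub> iota d"
proof -
  interpret ring Q by (rule ring_Q)
  show ?thesis
    by (rule qcoeff_inject[OF iota_carrier add.inv_closed[OF iota_carrier]])
      (simp only: fun_eq_iff qcoeff_neg[OF iota_carrier] qcoeff_iota, simp add: skew_const_def)
qed

lemma qcoeff_minus_iota:
  assumes "U \<in> carrier Q"
  shows "qcoeff (U \<ominus>\<^bsub>Q\<^esub> iota d) x = qcoeff U x - skew_const d x"
proof -
  interpret ring Q by (rule ring_Q)
  show ?thesis
    using assms iota_carrier[of d]
    by (simp add: minus_eq qcoeff_add qcoeff_neg qcoeff_iota)
qed

lemma qcoeff_mult_left_avoids:
  assumes "U \<in> carrier Q" "V \<in> carrier Q" "avoids_axis e U"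
  shows "qcoeff (U \<otimes>\<^bsub>Q\<^esub> V) (axis e n) = qcoeff U (0, 0) * qcoeff V (axis e n)"
proof -
  have "qcoeff (U \<otimes>\<^bsub>Q\<^esub> V) (axis e n)
      = (\<Sum>j\<le>n. if j = 0 then qcoeff U (0, 0) * qcoeff V (axis e n) else 0)"
    unfolding qcoeff_mult_axis[OF assms(1,2)]
    using assms(3) by (intro sum.cong refl) (auto simp: avoids_axis_def)
  then show ?thesis by simp
qed

lemma qcoeff_mult_right_avoids:
  assumes "U \<in> carrier Q" "V \<in> carrier Q" "avoids_axis e V"
  shows "qcoeff (U \<otimes>\<^bsub>Q\<^esub> V) (axis e n) = qcoeff U (axis e n) * (axis_endo e ^^ n) (qcoeff V (0, 0))"
proof -
  have "qcoeff (U \<otimes>\<^bsub>Q\<^esub> V) (axis e n)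
      = (\<Sum>j\<le>n. if j = n then qcoeff U (axis e n) * (axis_endo e ^^ n) (qcoeff V (0, 0)) else 0)"
    unfolding qcoeff_mult_axis[OF assms(1,2)]
    using assms(3) by (intro sum.cong refl) (auto simp: avoids_axis_def)
  then show ?thesis by simp
qed

lemma avoids_axis_iota: "avoids_axis e (iota d)"
  by (simp add: avoids_axis_def qcoeff_iota skew_const_axis)

lemma subring_avoids_axis: "subring {U \<in> carrier Q. avoids_axis e U} Q"
proof -
  interpret ring Q by (rule ring_Q)
  show ?thesis
  proof (rule subringI)
    show "\<one>\<^bsub>Q\<^esub> \<in> {U \<in> carrier Q. avoids_axis e U}"
      by (simp add: avoids_axis_def qcoeff_one skew_const_axis)
  qed (auto simp: avoids_axis_def qcoeff_neg qcoeff_add qcoeff_mult_left_avoids)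
qed

lemma automorphic_axis_coeff:
  assumes "U \<in> carrier Q" "automorphic_over Q iota \<tau> U"
  shows "qcoeff U (axis e k) * (axis_endo e ^^ k) b = \<tau> b * qcoeff U (axis e k)"
proof -
  have "qcoeff (U \<otimes>\<^bsub>Q\<^esub> iota b) (axis e k) = qcoeff (iota (\<tau> b) \<otimes>\<^bsub>Q\<^esub> U) (axis e k)"
    using assms(2) unfolding automorphic_over_def by simp
  then show ?thesis
    using assms(1) iota_carrier
    by (simp add: qcoeff_mult_left_avoids qcoeff_mult_right_avoids avoids_axis_iota qcoeff_iota)
      (simp add: skew_const_def)
qed

lemma automorphic_avoids_axis:
  assumes no_inner: "\<forall>k1 k2::nat. 0 < k1 \<longrightarrow> 0 < k2 \<longrightarrow>
      \<not> inner_automorphism ((s1 ^^ k1) \<circ> (inv_into UNIV s2 ^^ k2))"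
    and "surj s2" "U \<in> carrier Q" "automorphic_over Q iota \<tau> U"
  shows "avoids_axis True U \<or> avoids_axis False U"
proof (rule ccontr)
  assume "\<not> ?thesis"
  then obtain k1 k2 where k: "0 < k1" "0 < k2"
    "qcoeff U (axis True k1) \<noteq> 0" "qcoeff U (axis False k2) \<noteq> 0"
    unfolding avoids_axis_def by blast
  have "inner_automorphism ((s1 ^^ k1) \<circ> (inv_into UNIV s2 ^^ k2))"
    using automorphic_axis_coeff[OF assms(3,4), of True k1] automorphic_axis_coeff[OF assms(3,4), of False k2]
    by (intro inner_automorphism_of_intertwiners[OF k(3,4), where g = "s2 ^^ k2" and \<tau> = \<tau>])
      (simp_all add: axis_endo_def funpow_inv_into_cancel[OF assms(2)])
  then show False
    using no_inner k(1,2) by blast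
qed

lemma axis_degree_bound:
  assumes "finite G" "G \<subseteq> carrier Q"
  obtains N where "\<And>g n. g \<in> G \<Longrightarrow> N < n \<Longrightarrow> qcoeff g (axis e n) = 0"
proof -
  have "finite (axis e -` {x. qcoeff g x \<noteq> 0})" if "g \<in> G" for g
    using finite_qcoeff_support that assms(2) by (intro finite_vimageI) (auto simp: inj_def)
  then have "finite (\<Union>g\<in>G. {n. qcoeff g (axis e n) \<noteq> 0})"
    using assms(1) by (simp add: vimage_def)
  then obtain N where N: "\<forall>n\<in>(\<Union>g\<in>G. {n. qcoeff g (axis e n) \<noteq> 0}). n \<le> N"
    using finite_nat_set_iff_bounded_le by blast
  show ?thesis
  proof (rule that)
    fix g n assume "g \<in> G" "N < n"
    then show "qcoeff g (axis e n) = 0"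
      using N by fastforce
  qed
qed

lemma not_fg_over_avoiding_subring:
  assumes "H \<subseteq> carrier Q" "\<forall>h\<in>H. avoids_axis e h"
  shows "\<not> finitely_generated_left_module_over Q (generate_ring Q H)"
proof
  interpret ring Q by (rule ring_Q)
  assume "finitely_generated_left_module_over Q (generate_ring Q H)"
  then obtain G where G: "finite G" "G \<subseteq> carrier Q"
    and span: "\<forall>s\<in>carrier Q. \<exists>r. (\<forall>g\<in>G. r g \<in> generate_ring Q H)
      \<and> s = finsum Q (\<lambda>g. r g \<otimes>\<^bsub>Q\<^esub> g) G"
    unfolding finitely_generated_left_module_over_def by blast
  obtain N where N: "\<And>g n. g \<in> G \<Longrightarrow> N < n \<Longrightarrow> qcoeff g (axis e n) = 0"
    using axis_degree_bound[OF G] by blast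
  define t where "t = (\<lambda>x. if x = axis e (Suc N) then (1::'a) else 0)"
  have t: "t \<in> carrier P"
  proof -
    have "{x. t x \<noteq> 0} \<subseteq> {axis e (Suc N)}"
      by (auto simp: t_def)
    then show ?thesis
      unfolding skew_poly2_simps(1) by (auto intro: finite_subset)
  qed
  obtain r where r: "\<forall>g\<in>G. r g \<in> generate_ring Q H"
    and t_span: "cls t = finsum Q (\<lambda>g. r g \<otimes>\<^bsub>Q\<^esub> g) G"
    using span cls_in_carrier[OF t] by blast
  have "generate_ring Q H \<subseteq> {U \<in> carrier Q. avoids_axis e U}"
    by (rule generate_ring_min_subring1[OF assms(1) subring_avoids_axis]) (use assms in auto)
  then have r_avoids: "r g \<in> carrier Q \<and> avoids_axis e (r g)" if "g \<in> G" for g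
    using r that by blast
  have "qcoeff (r g \<otimes>\<^bsub>Q\<^esub> g) (axis e (Suc N)) = 0" if "g \<in> G" for g
    using r_avoids[OF that] that G(2) N[OF that] by (auto simp: qcoeff_mult_left_avoids)
  then have "qcoeff (cls t) (axis e (Suc N)) = 0"
    unfolding t_span using G r_avoids by (subst qcoeff_finsum) auto
  moreover have "qcoeff (cls t) (axis e (Suc N)) = 1"
    unfolding qcoeff_cls[OF t] by (simp add: t_def)
  ultimately show False
    by simp
qed

lemma axis_elements_relation:
  assumes "U \<in> carrier Q" "V \<in> carrier Q" "automorphic_over Q iota \<tau> U"
    and "avoids_axis False U" "avoids_axis True V"
  defines "c \<equiv> qcoeff U (0, 0)" and "d \<equiv> qcoeff V (0, 0)"
  shows "U \<otimes>\<^bsub>Q\<^esub> V = iota (\<tau> d) \<otimes>\<^bsub>Q\<^esub> U \<oplus>\<^bsub>Q\<^esub> iota c \<otimes>\<^bsub>Q\<^esub> V \<oplus>\<^bsub>Q\<^esub> iota (- (c * d))"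
proof -
  interpret ring Q by (rule ring_Q)
  define U' V' where "U' = U \<ominus>\<^bsub>Q\<^esub> iota c" and "V' = V \<ominus>\<^bsub>Q\<^esub> iota d"
  have carrier: "U' \<in> carrier Q" "V' \<in> carrier Q"
    using assms(1,2) iota_carrier by (simp_all add: U'_def V'_def)
  have coeffs: "qcoeff U' x = qcoeff U x - skew_const c x" "qcoeff V' x = qcoeff V x - skew_const d x" for x
    using assms(1,2) by (simp_all add: U'_def V'_def qcoeff_minus_iota)
  \<comment> \<open>U' and V' lie on different axes, and t1 t2 = t2 t1 = 0 in the quotient\<close>
  have avoids: "avoids_axis False U'" "avoids_axis True V'" "qcoeff U' (0, 0) = 0" "qcoeff V' (0, 0) = 0"
    using assms(4,5) by (simp_all add: avoids_axis_def coeffs skew_const_axis c_def d_def skew_const_def)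
  have "qcoeff (U' \<otimes>\<^bsub>Q\<^esub> V') x = qcoeff \<zero>\<^bsub>Q\<^esub> x" for x
  proof (cases "on_axes x")
    case True
    then obtain e n where x: "x = axis e n"
      unfolding on_axes_def by blast
    show ?thesis
    proof (cases e)
      case True
      then show ?thesis
        using x carrier avoids by (simp add: qcoeff_mult_right_avoids qcoeff_zero)
    next
      case False
      then show ?thesis
        using x carrier avoids by (simp add: qcoeff_mult_left_avoids qcoeff_zero)
    qed
  qed (simp add: qcoeff_off_axes)
  then have "U' \<otimes>\<^bsub>Q\<^esub> V' = \<zero>\<^bsub>Q\<^esub>"
    using carrier by (intro qcoeff_inject) auto
  then have "U \<otimes>\<^bsub>Q\<^esub> V = U \<otimes>\<^bsub>Q\<^esub> iota d \<oplus>\<^bsub>Q\<^esub> iota c \<otimes>\<^bsub>Q\<^esub> V \<ominus>\<^bsub>Q\<^esub> iota c \<otimes>\<^bsub>Q\<^esub> iota d"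
    using assms(1,2) iota_carrier unfolding U'_def V'_def by (intro mult_eq_of_shifted_mult_zero) auto
  then show ?thesis
    using assms(3) unfolding automorphic_over_def by (simp add: iota_mult iota_neg minus_eq)
qed

lemma quotient_not_automorphically_normalizable:
  assumes no_inner: "\<forall>k1 k2::nat. 0 < k1 \<longrightarrow> 0 < k2 \<longrightarrow>
      \<not> inner_automorphism ((s1 ^^ k1) \<circ> (inv_into UNIV s2 ^^ k2))"
    and "surj s2"
  shows "\<not> automorphically_normalizable Q iota"
proof
  interpret ring Q by (rule ring_Q)
  assume "automorphically_normalizable Q iota"
  then obtain m a \<tau> where a: "\<forall>i<m. a i \<in> carrier Q"
    and comm: "\<forall>i<m. \<forall>j<m. a i \<otimes>\<^bsub>Q\<^esub> a j = a j \<otimes>\<^bsub>Q\<^esub> a i"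
    and aut: "\<forall>i<m. automorphic_over Q iota (\<tau> i) (a i)"
    and indep: "left_alg_indep Q iota m a"
    and fg: "finitely_generated_left_module_over Q (generate_ring Q (range iota \<union> a ` {..<m}))"
    unfolding automorphically_normalizable_def by blast
  have "\<exists>i<m. \<not> avoids_axis e (a i)" for e
  proof (rule ccontr)
    assume "\<not> ?thesis"
    then have "\<forall>h \<in> range iota \<union> a ` {..<m}. avoids_axis e h"
      using avoids_axis_iota by auto
    moreover have "range iota \<union> a ` {..<m} \<subseteq> carrier Q"
      using a iota_carrier by auto
    ultimately show False
      using not_fg_over_avoiding_subring fg by blast
  qed
  then obtain i j where i: "i < m" "\<not> avoids_axis True (a i)"
    and j: "j < m" "\<not> avoids_axis False (a j)"
    by blast
  have "avoids_axis False (a i)" "avoids_axis True (a j)"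
    using automorphic_avoids_axis[OF no_inner assms(2)] a aut i j by blast+
  then have "i \<noteq> j"
    using i by blast
  moreover have "a i \<otimes>\<^bsub>Q\<^esub> a j = iota (\<tau> i (qcoeff (a j) (0, 0))) \<otimes>\<^bsub>Q\<^esub> a i
      \<oplus>\<^bsub>Q\<^esub> iota (qcoeff (a i) (0, 0)) \<otimes>\<^bsub>Q\<^esub> a j
      \<oplus>\<^bsub>Q\<^esub> iota (- (qcoeff (a i) (0, 0) * qcoeff (a j) (0, 0)))"
    using i j a aut \<open>avoids_axis False (a i)\<close> \<open>avoids_axis True (a j)\<close>
    by (intro axis_elements_relation) auto
  moreover have "a i \<in> carrier Q" "a j \<in> carrier Q" "a i \<otimes>\<^bsub>Q\<^esub> a j = a j \<otimes>\<^bsub>Q\<^esub> a i"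
    using a comm i(1) j(1) by auto
  ultimately show False
    using left_alg_indep_no_bilinear_relation[OF indep i(1) j(1)] iota_carrier iota_one iota_neg
    by blast
qed

end

theorem proposition5p11:
  fixes s1 s2 :: "'a::division_ring \<Rightarrow> 'a"
  assumes "ring_automorphism s1" and "ring_automorphism s2"
    and "s1 \<circ> s2 = s2 \<circ> s1"
    and "\<forall>k1 k2::nat. 0 < k1 \<longrightarrow> 0 < k2 \<longrightarrow>
           \<not> inner_automorphism ((s1 ^^ k1) \<circ> (inv_into UNIV s2 ^^ k2))"
  shows "\<not> aut_normalizable_pair s1 s2"
proof -
  interpret commuting_endomorphisms s1 s2
    using assms(1-3) unfolding ring_automorphism_def additive_def by unfold_locales auto
  have "surj s2"
    using assms(2) by (simp add: ring_automorphism_def bij_is_surj)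
  then have "\<not> automorphically_normalizable Q iota"
    by (rule quotient_not_automorphically_normalizable[OF assms(4)])
  moreover have "off_axes_ideal \<noteq> carrier P"
    using one_notin_off_axes_ideal ring.ring_simprules(6)[OF ring_skew_poly2] by blast
  ultimately show ?thesis
    using ideal_off_axes unfolding aut_normalizable_pair_def by blast
qed

end
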